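(* For any prime $p\ge5$, any integer $\alpha\ge1$ and any integer $n\ge0$, \[ b_{2}\!\left(p^{2\alpha}n+\frac{(24i+p)p^{2\alpha-1}-1}{24}\right)\equiv 0 \pmod 2 \] for each $i=1,2,\ldots,p-1$.
   Context: For a positive integer $\ell$, $b_\ell(n)$ denotes the number of $\ell$-regular partitions of $n$, i.e. partitions of $n$ having no part divisible by $\ell$; equivalently $\sum_{n\ge0}b_\ell(n)q^n=\prod_{k\ge1}\frac{1-q^{\ell k}}{1-q^k}$. *)

theory Defs
  imports Main "HOL-Library.Multiset" "HOL-Computational_Algebra.Primes"
begin

definition regular_partitions :: "nat \<Rightarrow> nat \<Rightarrow> nat multiset set" where
  "regular_partitions l n =
     {M. (\<forall>x \<in># M. 0 < x \<and> \<not> l dvd x) \<and> sum_mset M = n}"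

definition b :: "nat \<Rightarrow> nat \<Rightarrow> nat" where
  "b l n = card (regular_partitions l n)"

end

theory Submission
  imports Defs "HOL-Library.Nat_Bijection"
begin

text \<open>By Glaisher's bijection, which splits a part \<open>m * 2^j\<close> (\<open>m\<close> odd) into \<open>2^j\<close> copies
  of \<open>m\<close>, 2-regular partitions of \<open>n\<close> correspond to partitions of \<open>n\<close> into distinct parts.
  Franklin's involution pairs off the partitions into distinct parts of \<open>n\<close> unless \<open>24 n + 1\<close>
  is a perfect square, so \<open>b 2 n\<close> is even whenever \<open>24 n + 1\<close> is not a square.
  For the \<open>N\<close> of the theorem, \<open>24 N + 1 = p^(2\<alpha>-1) * (24 p n + 24 i + p)\<close> with the second
  factor prime to \<open>p\<close>, which is not a square since \<open>p\<close> occurs to an odd power.\<close>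

section \<open>Glaisher's bijection\<close>

definition odd_part :: "nat \<Rightarrow> nat" where
  "odd_part x = x div 2 ^ multiplicity 2 x"

lemma odd_part_times_power: "odd_part x * 2 ^ multiplicity 2 x = x"
  unfolding odd_part_def using multiplicity_dvd[of 2 x] by simp

lemma odd_odd_part: "x > 0 \<Longrightarrow> odd (odd_part x)"
  unfolding odd_part_def using multiplicity_decompose[where p=2 and x=x] by simp

lemma multiplicity_two_odd_times_power:
  fixes m j :: nat
  assumes "odd m"
  shows "multiplicity 2 (m * 2 ^ j) = j"
proof -
  have "m \<noteq> 0" using assms by (rule odd_pos[THEN gr_implies_not0])
  have "multiplicity (2::nat) (m * 2^j) = multiplicity 2 m + multiplicity 2 ((2::nat)^j)"
    by (rule prime_elem_multiplicity_mult_distrib) (use \<open>m \<noteq> 0\<close> in auto)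
  moreover have "multiplicity (2::nat) m = 0" using assms not_dvd_imp_multiplicity_0 by blast
  ultimately show ?thesis by simp
qed

lemma odd_part_odd_times_power: "odd (m::nat) \<Longrightarrow> odd_part (m * 2 ^ j) = m"
  unfolding odd_part_def using multiplicity_two_odd_times_power by simp

definition distinct_partitions :: "nat \<Rightarrow> nat set set" where
  "distinct_partitions n = {S. finite S \<and> 0 \<notin> S \<and> \<Sum>S = n}"

definition glaisher :: "nat set \<Rightarrow> nat multiset" where
  "glaisher S = (\<Sum>x\<in>S. replicate_mset (2 ^ multiplicity 2 x) (odd_part x))"

text \<open>The binary digits of the multiplicity of an odd part \<open>m\<close> tell which \<open>m * 2^j\<close> are parts.\<close>

definition glaisher_inv :: "nat multiset \<Rightarrow> nat set" where
  "glaisher_inv M = {x. 0 < x \<and> multiplicity 2 x \<in> set_decode (count M (odd_part x))}"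

lemma count_glaisher:
  "count (glaisher S) m = (\<Sum>x\<in>S. if odd_part x = m then 2 ^ multiplicity 2 x else 0)"
  unfolding glaisher_def count_sum by (rule sum.cong) auto

lemma finite_odd_times_power_in:
  fixes S :: "nat set"
  assumes "finite S" "odd m"
  shows "finite {j. m * 2 ^ j \<in> S}"
proof -
  have "{j. m * 2 ^ j \<in> S} \<subseteq> (\<lambda>x. multiplicity 2 x) ` S"
    using multiplicity_two_odd_times_power[OF assms(2)] by (metis image_eqI mem_Collect_eq subsetI)
  then show ?thesis using finite_subset assms(1) by blast
qed

lemma count_glaisher_odd:
  assumes "finite S" "0 \<notin> S" "odd m"
  shows "count (glaisher S) m = set_encode {j. m * 2 ^ j \<in> S}"
proof -
  have "count (glaisher S) m = (\<Sum>x\<in>{x\<in>S. odd_part x = m}. 2 ^ multiplicity 2 x)"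
    unfolding count_glaisher using assms(1) by (simp add: sum.inter_filter)
  also have "\<dots> = (\<Sum>j\<in>{j. m * 2 ^ j \<in> S}. 2 ^ j)"
  proof (rule sum.reindex_bij_witness[of _ "\<lambda>j. m * 2 ^ j" "multiplicity 2"])
    fix x assume "x \<in> {x\<in>S. odd_part x = m}"
    then show "m * 2 ^ multiplicity 2 x = x" using odd_part_times_power[of x] by auto
  qed (use assms multiplicity_two_odd_times_power odd_part_odd_times_power
         odd_part_times_power in auto)
  finally show ?thesis by (simp add: set_encode_def)
qed

lemma count_glaisher_even:
  assumes "0 \<notin> S" "even m"
  shows "count (glaisher S) m = 0"
  unfolding count_glaisher using assms odd_odd_part by (intro sum.neutral) (metis gr0I)

lemma sum_mset_glaisher: "finite S \<Longrightarrow> sum_mset (glaisher S) = \<Sum>S"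
  unfolding glaisher_def
proof (induction S rule: finite_induct)
  case (insert x F)
  then show ?case using odd_part_times_power[of x] by (simp add: mult.commute)
qed simp

lemma glaisher_inv_glaisher:
  assumes "finite S" "0 \<notin> S"
  shows "glaisher_inv (glaisher S) = S"
proof (rule set_eqI)
  fix x
  show "x \<in> glaisher_inv (glaisher S) \<longleftrightarrow> x \<in> S"
  proof (cases "x = 0")
    case True then show ?thesis using assms by (simp add: glaisher_inv_def)
  next
    case False
    then have odd: "odd (odd_part x)" using odd_odd_part by simp
    have "x \<in> glaisher_inv (glaisher S) \<longleftrightarrow>
          multiplicity 2 x \<in> set_decode (set_encode {j. odd_part x * 2 ^ j \<in> S})"
      using False count_glaisher_odd[OF assms odd] by (simp add: glaisher_inv_def)
    also have "\<dots> \<longleftrightarrow> odd_part x * 2 ^ multiplicity 2 x \<in> S"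
      using finite_odd_times_power_in[OF assms(1) odd] by simp
    finally show ?thesis using odd_part_times_power by simp
  qed
qed

lemma finite_glaisher_inv: "finite (glaisher_inv M)"
proof -
  have "glaisher_inv M \<subseteq>
        (\<lambda>(m,j). m * 2 ^ j) ` (SIGMA m:set_mset M. set_decode (count M m))"
  proof
    fix x assume x: "x \<in> glaisher_inv M"
    then have "multiplicity 2 x \<in> set_decode (count M (odd_part x))"
      by (simp add: glaisher_inv_def)
    then have "odd_part x \<in># M" by (metis empty_iff set_decode_zero count_eq_zero_iff)
    then show "x \<in> (\<lambda>(m,j). m * 2 ^ j) ` (SIGMA m:set_mset M. set_decode (count M m))"
      using x odd_part_times_power[of x] by (force simp: glaisher_inv_def)
  qed
  then show ?thesis by (rule finite_subset) auto
qed

lemma glaisher_glaisher_inv: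
  assumes "\<forall>x\<in>#M. odd x"
  shows "glaisher (glaisher_inv M) = M"
proof (rule multiset_eqI)
  fix m
  have zero: "0 \<notin> glaisher_inv M" by (simp add: glaisher_inv_def)
  show "count (glaisher (glaisher_inv M)) m = count M m"
  proof (cases "odd m")
    case True
    have "{j. m * 2 ^ j \<in> glaisher_inv M} = set_decode (count M m)"
      using True multiplicity_two_odd_times_power odd_part_odd_times_power odd_pos
      by (auto simp: glaisher_inv_def)
    then show ?thesis using count_glaisher_odd[OF finite_glaisher_inv zero True] by simp
  next
    case False
    then have "m \<notin># M" using assms by blast
    then show ?thesis using count_glaisher_even[OF zero] False by (simp add: not_in_iff)
  qed
qed

lemma bij_betw_glaisher:
  "bij_betw glaisher (distinct_partitions n) (regular_partitions 2 n)"
proof (rule bij_betw_byWitness[where f'=glaisher_inv])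
  show "\<forall>S\<in>distinct_partitions n. glaisher_inv (glaisher S) = S"
    using glaisher_inv_glaisher by (simp add: distinct_partitions_def)
  show "\<forall>M\<in>regular_partitions 2 n. glaisher (glaisher_inv M) = M"
    using glaisher_glaisher_inv by (simp add: regular_partitions_def)
  show "glaisher ` distinct_partitions n \<subseteq> regular_partitions 2 n"
  proof clarify
    fix S assume S: "S \<in> distinct_partitions n"
    then have "0 \<notin> S" by (simp add: distinct_partitions_def)
    then have "odd x" if "x \<in># glaisher S" for x
      using that count_glaisher_even by (metis not_in_iff)
    then show "glaisher S \<in> regular_partitions 2 n"
      using S sum_mset_glaisher
      by (auto intro: gr0I simp: regular_partitions_def distinct_partitions_def)
  qed
  show "glaisher_inv ` regular_partitions 2 n \<subseteq> distinct_partitions n"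
  proof clarify
    fix M assume M: "M \<in> regular_partitions 2 n"
    then have "\<Sum>(glaisher_inv M) = sum_mset M"
      using sum_mset_glaisher[OF finite_glaisher_inv, of M] glaisher_glaisher_inv[of M]
      by (simp add: regular_partitions_def)
    then show "glaisher_inv M \<in> distinct_partitions n"
      using M finite_glaisher_inv
      by (auto simp: distinct_partitions_def glaisher_inv_def regular_partitions_def)
  qed
qed

lemma b_2_eq_card_distinct_partitions: "b 2 n = card (distinct_partitions n)"
  unfolding b_def using bij_betw_glaisher bij_betw_same_card by metis

section \<open>Franklin's involution\<close>

lemma even_card_if_fixpoint_free_involution:
  assumes "finite A" "\<forall>x\<in>A. f x \<in> A \<and> f x \<noteq> x \<and> f (f x) = x"
  shows "even (card A)"
  using assms
proof (induction "card A" arbitrary: A rule: less_induct)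
  case less
  show ?case
  proof (cases "A = {}")
    case False
    then obtain x where x: "x \<in> A" by auto
    let ?A = "A - {x, f x}"
    have pair: "{x, f x} \<subseteq> A" "card {x, f x} = 2" using less.prems x by auto
    then have card: "card A = card ?A + 2"
      using less.prems(1) card_mono[OF less.prems(1) pair(1)] by (simp add: card_Diff_subset)
    have ffx: "f (f x) = x" using less.prems(2) x by blast
    have "\<forall>y\<in>?A. f y \<in> ?A \<and> f y \<noteq> y \<and> f (f y) = y"
    proof
      fix y assume y: "y \<in> ?A"
      then have "f y \<in> A" "f y \<noteq> y" "f (f y) = y" using less.prems(2) by auto
      moreover have "f y \<noteq> x" "f y \<noteq> f x" using y calculation(3) ffx by force+
      ultimately show "f y \<in> ?A \<and> f y \<noteq> y \<and> f (f y) = y" by simp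
    qed
    then have "even (card ?A)" using less.hyps less.prems(1) card by simp
    then show ?thesis using card by simp
  qed simp
qed

definition slope :: "nat set \<Rightarrow> nat" where
  "slope S = (LEAST k. Max S - k \<notin> S)"

lemma
  assumes "finite S" "S \<noteq> {}" "0 \<notin> S"
  shows Max_minus_slope_notin: "Max S - slope S \<notin> S"
    and Max_minus_in_if_less_slope: "k < slope S \<Longrightarrow> Max S - k \<in> S"
    and slope_pos: "1 \<le> slope S"
    and slope_le_Max: "slope S \<le> Max S"
proof -
  have stop: "Max S - Max S \<notin> S" using assms by simp
  show notin: "Max S - slope S \<notin> S"
    unfolding slope_def by (rule LeastI[of _ "Max S"]) (use stop in simp)
  show "k < slope S \<Longrightarrow> Max S - k \<in> S" unfolding slope_def using not_less_Least by blast
  show "slope S \<le> Max S" unfolding slope_def by (rule Least_le) (use stop in simp)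
  have "Max S - 0 \<in> S" using assms by simp
  then show "1 \<le> slope S" using notin by (metis less_one not_le)
qed

lemma slope_eqI:
  assumes "\<And>k. k < r \<Longrightarrow> Max S - k \<in> S" "Max S - r \<notin> S"
  shows "slope S = r"
  unfolding slope_def
proof (rule Least_equality)
  fix y assume "Max S - y \<notin> S"
  then show "r \<le> y" using assms(1) not_le by blast
qed (fact assms(2))

lemma slope_geI:
  assumes "finite S" "S \<noteq> {}" "0 \<notin> S" "\<And>k. k < r \<Longrightarrow> Max S - k \<in> S"
  shows "r \<le> slope S"
  using Max_minus_slope_notin[OF assms(1-3)] assms(4) not_le by blast

lemma
  assumes "finite S" "S \<noteq> {}" "0 \<notin> S"
  shows top_run_in: "Max S - slope S < y \<Longrightarrow> y \<le> Max S \<Longrightarrow> y \<in> S"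
    and Min_le_top_run: "Min S \<le> Max S - slope S + 1"
proof -
  show run: "y \<in> S" if "Max S - slope S < y" "y \<le> Max S" for y
    using Max_minus_in_if_less_slope[OF assms, of "Max S - y"] that slope_le_Max[OF assms]
    by (simp add: less_diff_conv2)
  have "Max S - slope S + 1 \<le> Max S" using slope_pos[OF assms] slope_le_Max[OF assms] by linarith
  then have "Max S - slope S + 1 \<in> S" using run by simp
  then show "Min S \<le> Max S - slope S + 1" using assms(1) by simp
qed

text \<open>The two Franklin moves: move the smallest part onto the top run, adding \<open>1\<close> to each of
  the \<open>Min S\<close> largest parts, or conversely take \<open>1\<close> from each part of the top run and make
  a new smallest part \<open>slope S\<close> out of them.\<close>

definition shift_smallest :: "nat set \<Rightarrow> nat set" where
  "shift_smallest S =
     (S - {Min S} - {Max S - Min S + 1..Max S}) \<union> {Max S - Min S + 2..Max S + 1}"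

definition shift_slope :: "nat set \<Rightarrow> nat set" where
  "shift_slope S =
     (S - {Max S - slope S + 1..Max S}) \<union> {Max S - slope S..Max S - 1} \<union> {slope S}"

text \<open>The excluded cases are the pentagonal shapes, where the smallest part belongs to the top run.\<close>

definition smallest_movable :: "nat set \<Rightarrow> bool" where
  "smallest_movable S \<longleftrightarrow>
     Min S \<le> slope S \<and> \<not> (Min S = slope S \<and> Min S = Max S - slope S + 1)"

definition slope_movable :: "nat set \<Rightarrow> bool" where
  "slope_movable S \<longleftrightarrow>
     slope S < Min S \<and> \<not> (Min S = slope S + 1 \<and> Min S = Max S - slope S + 1)"

definition franklin :: "nat set \<Rightarrow> nat set" where
  "franklin S =
     (if S = {} then S else if smallest_movable S then shift_smallest S
      else if slope_movable S then shift_slope S else S)"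

lemma Min_distinct_pos:
  fixes S :: "nat set"
  assumes "finite S" "S \<noteq> {}" "0 \<notin> S"
  shows "1 \<le> Min S"
proof -
  have "Min S \<noteq> 0" using Min_in[OF assms(1,2)] assms(3) by metis
  then show ?thesis by simp
qed

lemma Max_ge_twice_slope:
  assumes "finite S" "S \<noteq> {}" "0 \<notin> S" "slope_movable S"
  shows "2 * slope S + 1 \<le> Max S"
  using assms(4) Min_le_top_run[OF assms(1-3)] slope_le_Max[OF assms(1-3)]
  unfolding slope_movable_def by linarith

lemma mem_shift_smallest:
  assumes "finite S"
  shows "y \<in> shift_smallest S \<longleftrightarrow>
    (y \<in> S \<and> y \<noteq> Min S \<and> y < Max S - Min S + 1) \<or> (Max S - Min S + 2 \<le> y \<and> y \<le> Max S + 1)"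
  using Max_ge[OF assms, of y] unfolding shift_smallest_def by auto

lemma mem_shift_slope:
  assumes "finite S"
  shows "y \<in> shift_slope S \<longleftrightarrow>
    (y \<in> S \<and> y < Max S - slope S + 1) \<or> (Max S - slope S \<le> y \<and> y \<le> Max S - 1) \<or> y = slope S"
  using Max_ge[OF assms, of y] unfolding shift_slope_def by auto

lemma shift_smallest_shape:
  assumes fin: "finite S" and ne: "S \<noteq> {}" and z: "0 \<notin> S" and mov: "smallest_movable S"
  defines "T \<equiv> shift_smallest S"
  shows "finite T" "T \<noteq> {}" "0 \<notin> T" "Max T = Max S + 1" "slope T = Min S" "Min S < Min T"
proof -
  define s g r where "s = Min S" and "g = Max S" and "r = slope S"
  have mem: "y \<in> T \<longleftrightarrow> (y \<in> S \<and> y \<noteq> s \<and> y < g - s + 1) \<or> (g - s + 2 \<le> y \<and> y \<le> g + 1)"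
    for y unfolding T_def s_def g_def by (rule mem_shift_smallest[OF fin])
  have inS: "s \<le> y \<and> y \<le> g" if "y \<in> S" for y using fin that by (simp add: s_def g_def)
  have s1: "1 \<le> s" unfolding s_def by (rule Min_distinct_pos[OF fin ne z])
  have sr: "s \<le> r" using mov by (simp add: smallest_movable_def s_def r_def)
  have sg: "s \<le> g - r + 1" unfolding s_def g_def r_def by (rule Min_le_top_run[OF fin ne z])
  have rg: "r \<le> g" unfolding r_def g_def by (rule slope_le_Max[OF fin ne z])
  show finT: "finite T" using fin by (simp add: T_def shift_smallest_def)
  have top: "g + 1 \<in> T" unfolding mem using s1 sr sg rg by arith
  then show neT: "T \<noteq> {}" by auto
  show "0 \<notin> T" using mem[of 0] z by simp
  have "Max T = g + 1"
    by (rule Max_eqI) (use finT top inS mem in auto)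
  then show "Max T = Max S + 1" by (simp add: g_def)
  have "slope T = s"
  proof (rule slope_eqI)
    show "Max T - k \<in> T" if "k < s" for k
      unfolding \<open>Max T = g + 1\<close> mem using that s1 sr sg rg by arith
    show "Max T - s \<notin> T" unfolding \<open>Max T = g + 1\<close> mem using s1 sr sg rg by arith
  qed
  then show "slope T = Min S" by (simp add: s_def)
  have "s < y" if "y \<in> T" for y using that inS[of y] sr sg rg unfolding mem by auto
  then show "Min S < Min T" using finT neT by (simp add: s_def)
qed

lemma shift_slope_shape:
  assumes fin: "finite S" and ne: "S \<noteq> {}" and z: "0 \<notin> S" and mov: "slope_movable S"
  defines "T \<equiv> shift_slope S"
  shows "finite T" "T \<noteq> {}" "0 \<notin> T" "Min T = slope S" "Max T = Max S - 1" "slope S \<le> slope T"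
proof -
  define s g r where "s = Min S" and "g = Max S" and "r = slope S"
  have mem: "y \<in> T \<longleftrightarrow> (y \<in> S \<and> y < g - r + 1) \<or> (g - r \<le> y \<and> y \<le> g - 1) \<or> y = r"
    for y unfolding T_def g_def r_def by (rule mem_shift_slope[OF fin])
  have inS: "s \<le> y \<and> y \<le> g" if "y \<in> S" for y using fin that by (simp add: s_def g_def)
  have rs: "r < s" using mov by (simp add: slope_movable_def s_def r_def)
  have r1: "1 \<le> r" unfolding r_def by (rule slope_pos[OF fin ne z])
  have g2: "2 * r + 1 \<le> g" unfolding r_def g_def by (rule Max_ge_twice_slope[OF assms(1-4)])
  show finT: "finite T" using fin by (simp add: T_def shift_slope_def)
  have rT: "r \<in> T" unfolding mem by simp
  then show neT: "T \<noteq> {}" by auto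
  show zT: "0 \<notin> T" unfolding mem using z r1 g2 by arith
  have "r \<le> y" if "y \<in> T" for y using that inS[of y] rs g2 unfolding mem by auto
  then have "Min T = r" using finT rT by (intro Min_eqI) auto
  then show "Min T = slope S" by (simp add: r_def)
  have top: "g - 1 \<in> T" unfolding mem using g2 r1 by arith
  have "y \<le> g - 1" if "y \<in> T" for y using that inS[of y] g2 r1 unfolding mem by auto
  then have "Max T = g - 1" using finT top by (intro Max_eqI) auto
  then show "Max T = Max S - 1" by (simp add: g_def)
  have "r \<le> slope T"
  proof (rule slope_geI[OF finT neT zT])
    show "Max T - k \<in> T" if "k < r" for k unfolding \<open>Max T = g - 1\<close> mem using that g2 by arith
  qed
  then show "slope S \<le> slope T" by (simp add: r_def)
qed

lemma slope_movable_shift_smallest: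
  assumes fin: "finite S" and ne: "S \<noteq> {}" and z: "0 \<notin> S" and mov: "smallest_movable S"
  shows "slope_movable (shift_smallest S)" "\<not> smallest_movable (shift_smallest S)"
  using mov shift_smallest_shape[OF assms] Min_le_top_run[OF fin ne z] slope_le_Max[OF fin ne z]
  unfolding smallest_movable_def slope_movable_def by arith+

lemma smallest_movable_shift_slope:
  assumes "finite S" "S \<noteq> {}" "0 \<notin> S" "slope_movable S"
  shows "smallest_movable (shift_slope S)"
  using shift_slope_shape[OF assms] Max_ge_twice_slope[OF assms]
  unfolding smallest_movable_def by arith

lemma shift_slope_shift_smallest:
  assumes fin: "finite S" and ne: "S \<noteq> {}" and z: "0 \<notin> S" and mov: "smallest_movable S"
  shows "shift_slope (shift_smallest S) = S"
proof (rule set_eqI)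
  fix y
  define s g r where "s = Min S" and "g = Max S" and "r = slope S"
  note shape = shift_smallest_shape[OF assms]
  have sr: "s \<le> r" using mov by (simp add: smallest_movable_def s_def r_def)
  have sg: "s \<le> g - r + 1" unfolding s_def g_def r_def by (rule Min_le_top_run[OF fin ne z])
  have rg: "r \<le> g" unfolding r_def g_def by (rule slope_le_Max[OF fin ne z])
  have "s \<in> S" using fin ne by (simp add: s_def)
  moreover have "y \<in> S \<Longrightarrow> s \<le> y \<and> y \<le> g" using fin by (simp add: s_def g_def)
  moreover have "y \<in> S" if "g - r + 1 \<le> y" "y \<le> g"
    using that top_run_in[OF fin ne z] by (simp add: g_def r_def)
  ultimately show "y \<in> shift_slope (shift_smallest S) \<longleftrightarrow> y \<in> S"
    unfolding mem_shift_slope[OF shape(1)] mem_shift_smallest[OF fin] shape(4,5)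
      s_def[symmetric] g_def[symmetric]
    using sr sg rg by auto
qed

lemma shift_smallest_shift_slope:
  assumes fin: "finite S" and ne: "S \<noteq> {}" and z: "0 \<notin> S" and mov: "slope_movable S"
  shows "shift_smallest (shift_slope S) = S"
proof (rule set_eqI)
  fix y
  define s g r where "s = Min S" and "g = Max S" and "r = slope S"
  note shape = shift_slope_shape[OF assms]
  have rs: "r < s" using mov by (simp add: slope_movable_def s_def r_def)
  have r1: "1 \<le> r" unfolding r_def by (rule slope_pos[OF fin ne z])
  have g2: "2 * r + 1 \<le> g" unfolding r_def g_def by (rule Max_ge_twice_slope[OF assms])
  have "y \<in> S \<Longrightarrow> s \<le> y \<and> y \<le> g \<and> y \<noteq> g - r"
    using fin Max_minus_slope_notin[OF fin ne z] by (auto simp: s_def g_def r_def)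
  moreover have "y \<in> S" if "g - r + 1 \<le> y" "y \<le> g"
    using that top_run_in[OF fin ne z] by (simp add: g_def r_def)
  moreover have "r \<notin> S" using Min_le[OF fin] rs unfolding s_def by fastforce
  ultimately show "y \<in> shift_smallest (shift_slope S) \<longleftrightarrow> y \<in> S"
    unfolding mem_shift_smallest[OF shape(1)] mem_shift_slope[OF fin] shape(4,5)
      g_def[symmetric] r_def[symmetric]
    using rs g2 r1 by auto
qed


lemma sum_shift_smallest:
  assumes fin: "finite S" and ne: "S \<noteq> {}" and z: "0 \<notin> S" and mov: "smallest_movable S"
  shows "\<Sum>(shift_smallest S) = \<Sum>S"
proof -
  define s g r where "s = Min S" and "g = Max S" and "r = slope S"
  define R where "R = {g - s + 1..g}"
  have sS: "s \<in> S" using fin ne by (simp add: s_def)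
  have sr: "s \<le> r" and not_pent: "\<not> (s = r \<and> s = g - r + 1)"
    using mov by (simp_all add: smallest_movable_def s_def g_def r_def)
  have sg: "s \<le> g - r + 1" unfolding s_def g_def r_def by (rule Min_le_top_run[OF fin ne z])
  have rg: "r \<le> g" unfolding r_def g_def by (rule slope_le_Max[OF fin ne z])
  have RS: "R \<subseteq> S" using top_run_in[OF fin ne z] sr sg rg by (auto simp: R_def g_def r_def)
  have sR: "s \<notin> R" using sr not_pent sg rg unfolding R_def atLeastAtMost_iff by arith
  have card_R: "card R = s" using sr sg rg by (simp add: R_def)
  have shifted: "{g - s + 2..g + 1} = Suc ` R"
    using sr sg rg by (simp add: R_def)
  have "shift_smallest S = (S - {s} - R) \<union> Suc ` R"
    by (simp add: shift_smallest_def s_def g_def R_def shifted)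
  moreover have "(S - {s} - R) \<inter> Suc ` R = {}" using Max_ge[OF fin] by (force simp: R_def g_def)
  ultimately have "\<Sum>(shift_smallest S) = \<Sum>(S - {s} - R) + \<Sum>(Suc ` R)"
    using fin by (simp add: sum.union_disjoint R_def)
  also have "\<Sum>(Suc ` R) = (\<Sum>x\<in>R. x + 1)" by (simp add: sum.reindex)
  also have "\<dots> = \<Sum>R + s" using card_R by (simp only: sum.distrib) simp
  also have "\<Sum>S = \<Sum>(S - {s} - R) + (s + \<Sum>R)"
  proof -
    have "\<Sum>S = \<Sum>(S - ({s} \<union> R)) + \<Sum>({s} \<union> R)"
      using RS sS fin by (intro sum.subset_diff) auto
    then show ?thesis using sR by (simp add: R_def Diff_insert2 [symmetric])
  qed
  ultimately show ?thesis by simp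
qed

lemma sum_shift_slope:
  assumes "finite S" "S \<noteq> {}" "0 \<notin> S" "slope_movable S"
  shows "\<Sum>(shift_slope S) = \<Sum>S"
  using sum_shift_smallest[OF shift_slope_shape(1-3)[OF assms] smallest_movable_shift_slope[OF assms]]
  by (simp add: shift_smallest_shift_slope[OF assms])

lemma double_sum_atLeastAtMost: "2 * \<Sum>{a..a + k} = (k + 1) * (2 * a + k)" for a k :: nat
proof (induction k)
  case (Suc k)
  have "{a..a + Suc k} = insert (a + Suc k) {a..a + k}" by auto
  then show ?case using Suc by (simp add: algebra_simps)
qed simp

text \<open>When neither move applies, \<open>S\<close> is \<open>{t+1..2t+1}\<close> or \<open>{t+2..2t+2}\<close>, whose sums
  \<open>t' (3t' \<mp> 1) / 2\<close> (\<open>t' = t + 1\<close>) are the generalised pentagonal numbers.\<close>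

lemma square_if_not_movable:
  assumes fin: "finite S" and ne: "S \<noteq> {}" and z: "0 \<notin> S"
    and "\<not> smallest_movable S" and "\<not> slope_movable S"
  shows "\<exists>m. 24 * \<Sum>S + 1 = m ^ 2"
proof -
  define s g r where "s = Min S" and "g = Max S" and "r = slope S"
  have r1: "1 \<le> r" unfolding r_def by (rule slope_pos[OF fin ne z])
  have rg: "r \<le> g" unfolding r_def g_def by (rule slope_le_Max[OF fin ne z])
  have pent: "s = g - r + 1 \<and> (s = r \<or> s = r + 1)"
    using assms(4,5) unfolding smallest_movable_def slope_movable_def s_def g_def r_def by arith
  have "S = {s..g}"
  proof
    show "S \<subseteq> {s..g}" using fin by (auto simp: s_def g_def)
    show "{s..g} \<subseteq> S" using top_run_in[OF fin ne z] pent by (auto simp: g_def r_def)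
  qed
  obtain t where t: "r = Suc t" using r1 by (metis Suc_le_D One_nat_def)
  from pent show ?thesis
  proof (elim conjE disjE)
    assume "s = g - r + 1" "s = r"
    then have "S = {t + 1..(t + 1) + t}" using \<open>S = {s..g}\<close> t rg by auto
    then have "2 * \<Sum>S = (t + 1) * (3 * t + 2)"
      using double_sum_atLeastAtMost[of "t + 1" t] by (simp add: algebra_simps)
    then have "24 * \<Sum>S + 1 = (6 * t + 5) ^ 2" by (simp add: algebra_simps power2_eq_square)
    then show ?thesis by blast
  next
    assume "s = g - r + 1" "s = r + 1"
    then have "S = {t + 2..(t + 2) + t}" using \<open>S = {s..g}\<close> t rg by auto
    then have "2 * \<Sum>S = (t + 1) * (3 * t + 4)"
      using double_sum_atLeastAtMost[of "t + 2" t] by (simp add: algebra_simps)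
    then have "24 * \<Sum>S + 1 = (6 * t + 7) ^ 2" by (simp add: algebra_simps power2_eq_square)
    then show ?thesis by blast
  qed
qed

lemma franklin_involution:
  assumes S: "S \<in> distinct_partitions n" and not_square: "\<nexists>m. 24 * n + 1 = m ^ 2"
  shows "franklin S \<in> distinct_partitions n" "franklin S \<noteq> S" "franklin (franklin S) = S"
proof -
  have fin: "finite S" and z: "0 \<notin> S" and sum_n: "\<Sum>S = n"
    using S by (auto simp: distinct_partitions_def)
  have ne: "S \<noteq> {}"
  proof
    assume "S = {}"
    then have "24 * n + 1 = 1 ^ 2" using sum_n by simp
    then show False using not_square by blast
  qed
  consider "smallest_movable S" | "\<not> smallest_movable S" "slope_movable S"
    using square_if_not_movable[OF fin ne z] not_square sum_n by blast
  then have "franklin S \<in> distinct_partitions n \<and> franklin S \<noteq> S \<and> franklin (franklin S) = S"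
  proof cases
    case 1
    then show ?thesis
      using ne sum_n shift_smallest_shape[OF fin ne z 1] slope_movable_shift_smallest[OF fin ne z 1]
        sum_shift_smallest[OF fin ne z 1] shift_slope_shift_smallest[OF fin ne z 1]
      by (auto simp: franklin_def distinct_partitions_def)
  next
    case 2
    then show ?thesis
      using ne sum_n shift_slope_shape[OF fin ne z 2(2)] smallest_movable_shift_slope[OF fin ne z 2(2)]
        sum_shift_slope[OF fin ne z 2(2)] shift_smallest_shift_slope[OF fin ne z 2(2)]
      by (auto simp: franklin_def distinct_partitions_def)
  qed
  then show "franklin S \<in> distinct_partitions n" "franklin S \<noteq> S" "franklin (franklin S) = S"
    by blast+
qed

lemma finite_distinct_partitions: "finite (distinct_partitions n)"
proof (rule finite_subset)
  show "distinct_partitions n \<subseteq> Pow {0..n}"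
    using member_le_sum[of _ _ "\<lambda>x. x"] by (fastforce simp: distinct_partitions_def)
qed simp

lemma even_card_distinct_partitions:
  assumes "\<nexists>m. 24 * n + 1 = m ^ 2"
  shows "even (card (distinct_partitions n))"
  using even_card_if_fixpoint_free_involution[OF finite_distinct_partitions, of n franklin]
    franklin_involution[OF _ assms] by blast


section \<open>The arithmetic progressions\<close>

lemma prime_square_mod_24:
  fixes p :: nat
  assumes "prime p" "p \<ge> 5"
  shows "p ^ 2 mod 24 = 1"
proof -
  have divisors: "q dvd p \<Longrightarrow> q = 1 \<or> q = p" for q using assms(1) prime_nat_iff by blast
  have "\<not> 2 dvd p" "\<not> 3 dvd p" using divisors[of 2] divisors[of 3] assms(2) by auto
  define r where "r = p mod 24"
  have "r mod 2 \<noteq> 0" "r mod 3 \<noteq> 0" "r < 24"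
    using \<open>\<not> 2 dvd p\<close> \<open>\<not> 3 dvd p\<close> by (simp_all add: r_def mod_mod_cancel dvd_eq_mod_eq_0)
  then have "r = 1 \<or> r = 5 \<or> r = 7 \<or> r = 11 \<or> r = 13 \<or> r = 17 \<or> r = 19 \<or> r = 23"
    by presburger
  then have "r ^ 2 mod 24 = 1" by (elim disjE) simp_all
  then show ?thesis by (simp add: r_def power_mod)
qed

lemma not_square_odd_prime_power_times:
  fixes p e K m :: nat
  assumes "prime p" "odd e" "\<not> p dvd K"
  shows "m ^ 2 \<noteq> p ^ e * K"
proof
  assume square: "m ^ 2 = p ^ e * K"
  have K: "K \<noteq> 0" using assms(3) by (metis dvd_0_right)
  have pe: "p ^ e \<noteq> 0" using assms(1) by (simp add: prime_gt_0_nat)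
  have "m \<noteq> 0" using square K pe by (metis mult_eq_0_iff zero_power2)
  then have "multiplicity p (m ^ 2) = 2 * multiplicity p m"
    using prime_elem_multiplicity_power_distrib assms(1) by auto
  moreover have "multiplicity p (p ^ e * K) = e"
    using prime_elem_multiplicity_mult_distrib[OF _ pe K] not_dvd_imp_multiplicity_0[OF assms(3)]
      assms(1) by simp
  ultimately show False using assms(2) square by auto
qed

lemma twentyfour_times_plus_one:
  fixes p \<alpha> n i :: nat
  assumes "prime p" "p \<ge> 5" "\<alpha> \<ge> 1"
  shows "24 * (p ^ (2 * \<alpha>) * n + ((24 * i + p) * p ^ (2 * \<alpha> - 1) - 1) div 24) + 1
    = p ^ (2 * \<alpha> - 1) * (24 * p * n + 24 * i + p)"
proof -
  define P where "P = p ^ (2 * \<alpha> - 1)"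
  have pP: "p ^ (2 * \<alpha>) = p * P"
    using assms(3) by (simp add: P_def power_Suc[symmetric])
  have "p ^ (2 * \<alpha>) mod 24 = 1"
    using prime_square_mod_24[OF assms(1,2)]
    by (metis power_mod power_mult mod_mod_trivial power_one)
  moreover have "(24 * i + p) * P = p ^ (2 * \<alpha>) + 24 * (i * P)"
    unfolding pP by (simp add: algebra_simps)
  ultimately have "(24 * i + p) * P mod 24 = 1" by simp
  then have "24 * (((24 * i + p) * P - 1) div 24) + 1 = (24 * i + p) * P"
    by (metis add_diff_cancel_right' div_mult_mod_eq mult.commute nonzero_mult_div_cancel_left
        zero_neq_numeral)
  then show ?thesis unfolding P_def[symmetric] pP by (simp add: algebra_simps)
qed

lemma prime_not_dvd_cofactor:
  fixes p n i :: nat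
  assumes "prime p" "p \<ge> 5" "1 \<le> i" "i < p"
  shows "\<not> p dvd 24 * p * n + 24 * i + p"
proof
  assume "p dvd 24 * p * n + 24 * i + p"
  then have "p dvd 24 * i" by (simp add: dvd_add_left_iff dvd_add_right_iff)
  moreover have "\<not> p dvd i" using assms(3,4) by (auto dest: dvd_imp_le)
  moreover have "\<not> p dvd 24"
  proof
    assume "p dvd 24"
    then have "p dvd 2 ^ 3 * 3" by simp
    then have "p dvd 2 \<or> p dvd 3" using assms(1) by (metis prime_dvd_mult_iff prime_dvd_power)
    then show False using assms(2) by (auto dest: dvd_imp_le)
  qed
  ultimately show False using prime_dvd_mult_iff[OF assms(1)] by blast
qed

theorem theorem3p2:
  fixes p \<alpha> n i :: nat
  assumes "prime p" and "p \<ge> 5" and "\<alpha> \<ge> 1" and "1 \<le> i" and "i \<le> p - 1"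
  shows "b 2 (p ^ (2 * \<alpha>) * n + ((24 * i + p) * p ^ (2 * \<alpha> - 1) - 1) div 24) mod 2 = 0"
proof -
  define N where "N = p ^ (2 * \<alpha>) * n + ((24 * i + p) * p ^ (2 * \<alpha> - 1) - 1) div 24"
  have "24 * N + 1 = p ^ (2 * \<alpha> - 1) * (24 * p * n + 24 * i + p)"
    unfolding N_def by (rule twentyfour_times_plus_one[OF assms(1-3)])
  moreover have "odd (2 * \<alpha> - 1)" using assms(3) by simp
  moreover have "\<not> p dvd 24 * p * n + 24 * i + p"
    using prime_not_dvd_cofactor assms by simp
  ultimately have "\<nexists>m. 24 * N + 1 = m ^ 2"
    using not_square_odd_prime_power_times[OF assms(1)] by metis
  then have "even (b 2 N)"
    unfolding b_2_eq_card_distinct_partitions by (rule even_card_distinct_partitions)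
  then show ?thesis unfolding N_def by simp
qed

end
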